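(* Let $R_0=\mathrm{diag}(1,1,1)$, $R_1=\mathrm{diag}(1,-1,-1)$, $R_2=\mathrm{diag}(-1,1,-1)$, $R_3=\mathrm{diag}(-1,-1,1)$, and for $j\in\{0,1,2,3\}$ let $$U_j=\{R_je^{\Lambda(\omega)}:\omega\in\mathbb{R}^3,\ \|\omega\|_2<\pi\}\subset SO(3),\qquad \mathcal{U}_j=\Big\{\begin{bmatrix}R&p\\0&1\end{bmatrix}: R\in U_j,\ p\in\mathbb{R}^3\Big\}\subset SE(3).$$ Then $U_0\cup U_1\cup U_2\cup U_3=SO(3)$ and $\mathcal{U}_0\cup\mathcal{U}_1\cup\mathcal{U}_2\cup\mathcal{U}_3=SE(3)$.
   Context: $SO(3)=\{R\in\mathbb{R}^{3\times3}:R^\top R=I,\det R=1\}$, $SE(3)=\{\begin{bmatrix}R&p\\0&1\end{bmatrix}:R\in SO(3),p\in\mathbb{R}^3\}$. For $\omega\in\mathbb{R}^3$, $\Lambda(\omega)=\begin{bmatrix}0&-\omega_3&\omega_2\\\omega_3&0&-\omega_1\\-\omega_2&\omega_1&0\end{bmatrix}$, and $e^{(\cdot)}$ is the matrix exponential. *)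

theory Defs
  imports "HOL-Analysis.Analysis"
begin

fun mat_pow :: "real^3^3 \<Rightarrow> nat \<Rightarrow> real^3^3" where
  "mat_pow A 0 = mat 1"
| "mat_pow A (Suc n) = A ** mat_pow A n"

definition mexp :: "real^3^3 \<Rightarrow> real^3^3" where
  "mexp A = (\<Sum>n. (1 / fact n) *\<^sub>R mat_pow A n)"

definition Lambda :: "real^3 \<Rightarrow> real^3^3" where
  "Lambda w = vector [vector [0, - w$3, w$2],
                      vector [w$3, 0, - w$1],
                      vector [- w$2, w$1, 0]]"

definition SO3 :: "(real^3^3) set" where
  "SO3 = {R. transpose R ** R = mat 1 \<and> det R = 1}"

definition hom :: "real^3^3 \<Rightarrow> real^3 \<Rightarrow> real^4^4" where
  "hom R p = vector [vector [R$1$1, R$1$2, R$1$3, p$1],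
                     vector [R$2$1, R$2$2, R$2$3, p$2],
                     vector [R$3$1, R$3$2, R$3$3, p$3],
                     vector [0, 0, 0, 1]]"

definition SE3 :: "(real^4^4) set" where
  "SE3 = {hom R p | R p. R \<in> SO3}"

definition diag3 :: "real \<Rightarrow> real \<Rightarrow> real \<Rightarrow> real^3^3" where
  "diag3 a b c = vector [vector [a, 0, 0], vector [0, b, 0], vector [0, 0, c]]"

definition Rj :: "nat \<Rightarrow> real^3^3" where
  "Rj j = (if j = 0 then diag3 1 1 1 else if j = 1 then diag3 1 (-1) (-1)
           else if j = 2 then diag3 (-1) 1 (-1) else diag3 (-1) (-1) 1)"

definition Uj :: "nat \<Rightarrow> (real^3^3) set" where
  "Uj j = {Rj j ** mexp (Lambda w) | w. norm w < pi}"

definition UUj :: "nat \<Rightarrow> (real^4^4) set" where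
  "UUj j = {hom R p | R p. R \<in> Uj j}"

end

theory Submission
  imports Defs
begin

(* Since Lambda w ** Lambda w ** Lambda w = -|w|^2 Lambda w, the exponential series collapses to
   Rodrigues' formula e^{Lambda w} = I + (sin t / t) Lambda w + ((1 - cos t) / t^2) Lambda w^2 with
   t = |w|, and this matrix is a rotation.  Conversely, a rotation P with trace P > -1 has angle
   t = arccos ((trace P - 1) / 2) < pi, and the axis read off from P - P^T, rescaled to length t,
   is a logarithm of P.  For Q in SO(3) the traces of the four matrices R_j Q sum to zero, so one
   of them exceeds -1; then R_j Q = e^{Lambda w} and Q = R_j e^{Lambda w} because R_j^2 = I. *)

lemma trace_3: "trace (A :: real^3^3) = A$1$1 + A$2$2 + A$3$3"
  by (simp add: trace_def sum_3)

lemma norm_vec3_sq: "(norm (w :: real^3))\<^sup>2 = (w$1)\<^sup>2 + (w$2)\<^sup>2 + (w$3)\<^sup>2"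
  unfolding power2_norm_eq_inner by (simp add: inner_vec_def sum_3 power2_eq_square)

lemma Lambda_0: "Lambda 0 = 0"
  by (simp add: vec_eq_iff forall_3 Lambda_def)

lemma Lambda_scaleR: "Lambda (c *\<^sub>R w) = c *\<^sub>R Lambda w"
  by (simp add: vec_eq_iff forall_3 Lambda_def)

lemma Lambda_sq_nth:
  "(Lambda w ** Lambda w) $ i $ j = w$i * w$j - (norm w)\<^sup>2 * mat 1 $ i $ j"
proof -
  have "\<forall>i j. (Lambda w ** Lambda w) $ i $ j = w$i * w$j - (norm w)\<^sup>2 * mat 1 $ i $ j"
    unfolding forall_3 norm_vec3_sq
    by (simp add: Lambda_def matrix_matrix_mult_def sum_3 mat_def power2_eq_square algebra_simps)
  then show ?thesis by blast
qed

lemma Lambda_cube: "Lambda w ** (Lambda w ** Lambda w) = (- (norm w)\<^sup>2) *\<^sub>R Lambda w"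
  unfolding norm_vec3_sq
  by (simp add: vec_eq_iff forall_3 Lambda_def matrix_matrix_mult_def sum_3 algebra_simps power2_eq_square)

lemma mat_pow_odd:
  assumes "K ** (K ** K) = (- m) *\<^sub>R K"
  shows "mat_pow K (2 * k + 1) = (- m) ^ k *\<^sub>R K"
proof (induction k)
  case 0
  then show ?case by simp
next
  case (Suc k)
  have "2 * Suc k + 1 = Suc (Suc (2 * k + 1))"
    by simp
  then have "mat_pow K (2 * Suc k + 1) = K ** (K ** mat_pow K (2 * k + 1))"
    by (simp only: mat_pow.simps)
  also have "\<dots> = (- m) ^ k *\<^sub>R (K ** (K ** K))"
    unfolding Suc.IH by (simp add: matrix_scalar_ac scalar_matrix_assoc[symmetric])
  finally show ?case
    by (simp add: assms)
qed

lemma mat_pow_even: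
  assumes "K ** (K ** K) = (- m) *\<^sub>R K"
  shows "mat_pow K (2 * k + 2) = (- m) ^ k *\<^sub>R (K ** K)"
proof -
  have "2 * k + 2 = Suc (2 * k + 1)"
    by simp
  then have "mat_pow K (2 * k + 2) = K ** mat_pow K (2 * k + 1)"
    by (simp only: mat_pow.simps)
  then show ?thesis
    unfolding mat_pow_odd[OF assms] by (simp add: matrix_scalar_ac scalar_matrix_assoc[symmetric])
qed

lemma mexp_0: "mexp 0 = mat 1"
proof -
  have "(1 / fact n) *\<^sub>R mat_pow 0 n = (if n = 0 then mat 1 else 0)" for n
    by (cases n) simp_all
  then show ?thesis
    unfolding mexp_def using sums_single[of 0 "\<lambda>_. mat 1 :: real^3^3"] by (simp add: sums_iff)
qed

lemma mexp_cube_relation: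
  assumes cube: "K ** (K ** K) = (- \<theta>\<^sup>2) *\<^sub>R K" and "\<theta> \<noteq> 0"
  shows "mexp K = mat 1 + (sin \<theta> / \<theta>) *\<^sub>R K + ((1 - cos \<theta>) / \<theta>\<^sup>2) *\<^sub>R (K ** K)"
proof -
  define \<delta> where "\<delta> n = (if n = 0 then 1 else 0 :: real)" for n :: nat
  define s where "s n = sin_coeff n * \<theta> ^ n / \<theta>" for n
  define c where "c n = (\<delta> n - cos_coeff n * \<theta> ^ n) / \<theta>\<^sup>2" for n
  have coeffs: "(1 / fact n) *\<^sub>R mat_pow K n = \<delta> n *\<^sub>R mat 1 + s n *\<^sub>R K + c n *\<^sub>R (K ** K)" for n
  proof -
    consider "n = 0" | k where "n = 2 * k + 1" | k where "n = 2 * k + 2"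
      by atomize_elim presburger
    then show ?thesis
    proof cases
      case 1
      then show ?thesis by (simp add: \<delta>_def s_def c_def)
    next
      case (2 k)
      have "sin_coeff n = (- 1) ^ k / fact n" "\<theta> ^ n = \<theta> * (\<theta>\<^sup>2) ^ k"
        by (simp_all add: sin_coeff_def 2 power_add power_mult del: fact_Suc)
      then have "s n = (- \<theta>\<^sup>2) ^ k / fact n"
        using \<open>\<theta> \<noteq> 0\<close> by (simp add: s_def power_minus[of "\<theta>\<^sup>2"])
      then show ?thesis
        unfolding 2 mat_pow_odd[OF cube] by (simp add: \<delta>_def c_def cos_coeff_def)
    next
      case (3 k)
      have "cos_coeff n = - ((- 1) ^ k / fact n)" "\<theta> ^ n = \<theta>\<^sup>2 * (\<theta>\<^sup>2) ^ k"
        by (simp_all add: cos_coeff_def 3 power_add power_mult power2_eq_square del: fact_Suc)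
      then have "c n = (- \<theta>\<^sup>2) ^ k / fact n"
        using \<open>\<theta> \<noteq> 0\<close> by (simp add: c_def \<delta>_def 3 power_minus[of "\<theta>\<^sup>2"])
      then show ?thesis
        unfolding 3 mat_pow_even[OF cube] by (simp add: \<delta>_def s_def sin_coeff_def)
    qed
  qed
  have "\<delta> sums 1"
    unfolding \<delta>_def using sums_single[of 0 "\<lambda>_. 1 :: real"] by simp
  moreover have "s sums (sin \<theta> / \<theta>)"
    unfolding s_def using sums_divide[OF sin_converges[of \<theta>]] by simp
  moreover have "c sums ((1 - cos \<theta>) / \<theta>\<^sup>2)"
    unfolding c_def using sums_divide[OF sums_diff[OF \<open>\<delta> sums 1\<close> cos_converges[of \<theta>]]] by simp
  ultimately have "(\<lambda>n. (1 / fact n) *\<^sub>R mat_pow K n) sums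
      (1 *\<^sub>R mat 1 + (sin \<theta> / \<theta>) *\<^sub>R K + ((1 - cos \<theta>) / \<theta>\<^sup>2) *\<^sub>R (K ** K))"
    unfolding coeffs by (intro sums_add sums_scaleR_left)
  then show ?thesis
    unfolding mexp_def by (simp add: sums_iff)
qed

lemma Rodrigues_formula:
  assumes "w \<noteq> 0"
  shows "mexp (Lambda w) = mat 1 + (sin (norm w) / norm w) *\<^sub>R Lambda w
           + ((1 - cos (norm w)) / (norm w)\<^sup>2) *\<^sub>R (Lambda w ** Lambda w)"
  using assms by (simp add: mexp_cube_relation Lambda_cube)

lemma SO3_iff_rotation_matrix: "P \<in> SO3 \<longleftrightarrow> rotation_matrix P"
  by (simp add: SO3_def rotation_matrix_def orthogonal_matrix)

lemma SO3_mult: "P \<in> SO3 \<Longrightarrow> Q \<in> SO3 \<Longrightarrow> P ** Q \<in> SO3"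
  by (simp add: SO3_iff_rotation_matrix rotation_matrix_def orthogonal_matrix_mul det_mul)

lemma quadratic_in_Lambda_in_SO3:
  assumes "a * a = 2 * b - b * b * (norm w)\<^sup>2"
  shows "mat 1 + a *\<^sub>R Lambda w + b *\<^sub>R (Lambda w ** Lambda w) \<in> SO3"
  (* For K = Lambda w: (I + aK + bK^2)^T (I + aK + bK^2) = I + (2b - a^2 - b^2 |w|^2) K^2,
     and the determinant is 1 + |w|^2 (a^2 - 2b + b^2 |w|^2). *)
  using assms unfolding SO3_def norm_vec3_sq
  by (simp add: vec_eq_iff forall_3 Lambda_def matrix_matrix_mult_def sum_3 transpose_def mat_def det_3)
     (intro conjI; algebra)

lemma mexp_Lambda_in_SO3: "mexp (Lambda w) \<in> SO3"
proof (cases "w = 0")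
  case True
  then show ?thesis by (simp add: Lambda_0 mexp_0 SO3_def)
next
  case False
  define \<theta> where "\<theta> = norm w"
  define a where "a = sin \<theta> / \<theta>"
  define b where "b = (1 - cos \<theta>) / \<theta>\<^sup>2"
  have "\<theta> \<noteq> 0" using False by (simp add: \<theta>_def)
  then have "a * \<theta> = sin \<theta>" "b * \<theta>\<^sup>2 = 1 - cos \<theta>"
    by (simp_all add: a_def b_def)
  with sin_cos_squared_add[of \<theta>] have "(a * a) * \<theta>\<^sup>2 = (2 * b - b * b * \<theta>\<^sup>2) * \<theta>\<^sup>2"
    by algebra
  with \<open>\<theta> \<noteq> 0\<close> have "a * a = 2 * b - b * b * (norm w)\<^sup>2"
    by (simp add: \<theta>_def)
  from quadratic_in_Lambda_in_SO3[OF this] show ?thesis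
    by (simp add: Rodrigues_formula[OF False] a_def b_def \<theta>_def)
qed

lemma rotation_matrix_column_cross:
  fixes P :: "real^3^3"
  assumes "rotation_matrix P"
  shows "column 1 P = cross3 (column 2 P) (column 3 P)"
    and "column 2 P = cross3 (column 3 P) (column 1 P)"
    and "column 3 P = cross3 (column 1 P) (column 2 P)"
  using cross_rotation_matrix[OF assms] cross_basis
  by (simp_all flip: matrix_vector_mult_basis)

definition vee :: "real^3^3 \<Rightarrow> real^3" where
  "vee P = vector [P$3$2 - P$2$3, P$1$3 - P$3$1, P$2$1 - P$1$2]"

lemma Lambda_vee: "Lambda (vee P) = P - transpose P"
  by (simp add: vec_eq_iff forall_3 Lambda_def vee_def transpose_def)

lemma rotation_matrix_symmetric_part:
  fixes P :: "real^3^3"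
  assumes "rotation_matrix P"
  shows "(1 + trace P) * (P$i$j + P$j$i - (trace P - 1) * mat 1 $ i $ j) = vee P $ i * vee P $ j"
proof -
  have "transpose P ** P = mat 1" "P ** transpose P = mat 1"
    using assms by (simp_all add: rotation_matrix_def orthogonal_matrix_def)
  \<comment> \<open>orthonormality and the cofactor identities make every entry a polynomial consequence\<close>
  with rotation_matrix_column_cross[OF assms]
  have "\<forall>i j. (1 + trace P) * (P$i$j + P$j$i - (trace P - 1) * mat 1 $ i $ j) = vee P $ i * vee P $ j"
    unfolding forall_3
    by (simp add: vec_eq_iff forall_3 matrix_matrix_mult_def sum_3 transpose_def mat_def column_def
        cross3_def vee_def trace_def) (elim conjE; intro conjI; algebra)
  then show ?thesis by blast
qed

lemma norm_vee_rotation_matrix: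
  fixes P :: "real^3^3"
  assumes "rotation_matrix P"
  shows "(norm (vee P))\<^sup>2 = (1 + trace P) * (3 - trace P)"
proof -
  have "(vee P $ k)\<^sup>2 = (1 + trace P) * (2 * P$k$k - (trace P - 1))" for k
    using rotation_matrix_symmetric_part[OF assms, of k k] by (simp add: power2_eq_square mat_def)
  then show ?thesis
    unfolding norm_vec3_sq by (simp add: trace_3) (simp add: algebra_simps)
qed

lemma trace_rotation_matrix_le:
  fixes P :: "real^3^3"
  assumes "rotation_matrix P"
  shows "trace P \<le> 3"
proof (rule ccontr)
  assume "\<not> trace P \<le> 3"
  then have "(1 + trace P) * (3 - trace P) < 0"
    by (intro mult_pos_neg) auto
  then show False
    using norm_vee_rotation_matrix[OF assms] by (metis zero_le_power2 not_le)
qed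

lemma rotation_matrix_trace_eq_3:
  fixes P :: "real^3^3"
  assumes "rotation_matrix P" "trace P = 3"
  shows "P = mat 1"
proof -
  have "vee P = 0"
    using norm_vee_rotation_matrix[OF assms(1)] assms(2) by simp
  moreover have "P$i$j + P$j$i = 2 * mat 1 $ i $ j" for i j
    using rotation_matrix_symmetric_part[OF assms(1), of i j] assms(2) \<open>vee P = 0\<close> by simp
  then have "\<forall>i j. P$i$j + P$j$i = 2 * mat 1 $ i $ j"
    by blast
  ultimately show ?thesis
    unfolding forall_3 by (simp add: vec_eq_iff forall_3 vee_def mat_def)
qed

lemma sin_arccos_half:
  fixes t :: real
  assumes "-1 \<le> t" "t \<le> 3"
  shows "(2 * sin (arccos ((t - 1) / 2)))\<^sup>2 = (1 + t) * (3 - t)"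
proof -
  have "\<bar>(t - 1) / 2\<bar> \<le> 1"
    using assms by simp
  then have "(2 * sin (arccos ((t - 1) / 2)))\<^sup>2 = 4 * (1 - ((t - 1) / 2)\<^sup>2)"
    by (simp add: sin_arccos power_mult_distrib abs_square_le_1)
  then show ?thesis
    by (simp add: power2_eq_square field_simps)
qed

lemma Rodrigues_coefficients_arccos:
  fixes t :: real
  assumes "-1 < t" "t < 3"
  defines "\<theta> \<equiv> arccos ((t - 1) / 2)" and "\<kappa> \<equiv> arccos ((t - 1) / 2) / (2 * sin (arccos ((t - 1) / 2)))"
  shows "sin \<theta> / \<theta> * \<kappa> = 1 / 2"
    and "(1 - cos \<theta>) / \<theta>\<^sup>2 * \<kappa>\<^sup>2 * (1 + t) = 1 / 2"
    and "(1 - cos \<theta>) / \<theta>\<^sup>2 * \<theta>\<^sup>2 = (3 - t) / 2"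
proof -
  have "0 < \<theta>" "\<theta> < pi"
    using arccos_lt_bounded[of "(t - 1) / 2"] assms(1,2) by (simp_all add: \<theta>_def)
  then have "0 < sin \<theta>"
    by (rule sin_gt_zero)
  have cos: "cos \<theta> = (t - 1) / 2"
    using assms(1,2) by (simp add: \<theta>_def)
  have sin: "(2 * sin \<theta>)\<^sup>2 = (1 + t) * (3 - t)"
    using sin_arccos_half assms(1,2) by (simp add: \<theta>_def)
  have \<kappa>: "\<kappa> * (2 * sin \<theta>) = \<theta>"
    using \<open>0 < sin \<theta>\<close> by (simp add: \<kappa>_def \<theta>_def)
  show "sin \<theta> / \<theta> * \<kappa> = 1 / 2"
    using \<open>0 < \<theta>\<close> \<open>0 < sin \<theta>\<close> by (simp add: \<kappa>_def \<theta>_def)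
  show b\<theta>: "(1 - cos \<theta>) / \<theta>\<^sup>2 * \<theta>\<^sup>2 = (3 - t) / 2"
    using \<open>0 < \<theta>\<close> by (simp add: cos field_simps)
  have "(1 - cos \<theta>) / \<theta>\<^sup>2 * \<kappa>\<^sup>2 * (1 + t) * (2 * sin \<theta>)\<^sup>2
      = (1 - cos \<theta>) / \<theta>\<^sup>2 * (\<kappa> * (2 * sin \<theta>))\<^sup>2 * (1 + t)"
    by (simp only: power_mult_distrib mult_ac)
  also have "\<dots> = 1 / 2 * (2 * sin \<theta>)\<^sup>2"
    using \<kappa> b\<theta> sin by simp
  finally show "(1 - cos \<theta>) / \<theta>\<^sup>2 * \<kappa>\<^sup>2 * (1 + t) = 1 / 2"
    by (rule mult_right_cancel[THEN iffD1, rotated]) (use \<open>0 < sin \<theta>\<close> in simp)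
qed

definition rotation_angle :: "real^3^3 \<Rightarrow> real" where
  "rotation_angle P = arccos ((trace P - 1) / 2)"

definition rotation_log :: "real^3^3 \<Rightarrow> real^3" where
  "rotation_log P = (rotation_angle P / (2 * sin (rotation_angle P))) *\<^sub>R vee P"

lemma rotation_angle_bounds:
  assumes "-1 < trace P" "trace P < 3"
  shows "0 < rotation_angle P" "rotation_angle P < pi"
  using arccos_lt_bounded[of "(trace P - 1) / 2"] assms by (simp_all add: rotation_angle_def)

lemma sin_rotation_angle:
  fixes P :: "real^3^3"
  assumes "rotation_matrix P" "-1 \<le> trace P"
  shows "2 * sin (rotation_angle P) = norm (vee P)"
proof -
  have "-1 \<le> (trace P - 1) / 2" "(trace P - 1) / 2 \<le> 1"
    using trace_rotation_matrix_le[OF assms(1)] assms(2) by simp_all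
  then have "0 \<le> 2 * sin (rotation_angle P)"
    unfolding rotation_angle_def by (simp add: sin_ge_zero arccos_lbound arccos_ubound)
  moreover have "(2 * sin (rotation_angle P))\<^sup>2 = (norm (vee P))\<^sup>2"
    using sin_arccos_half[OF assms(2) trace_rotation_matrix_le[OF assms(1)]]
    by (simp add: rotation_angle_def norm_vee_rotation_matrix[OF assms(1)])
  ultimately show ?thesis
    using power2_eq_iff_nonneg norm_ge_zero by blast
qed

lemma norm_rotation_log:
  fixes P :: "real^3^3"
  assumes "rotation_matrix P" "-1 < trace P" "trace P < 3"
  shows "norm (rotation_log P) = rotation_angle P"
proof -
  have "0 < rotation_angle P" "rotation_angle P < pi"
    using rotation_angle_bounds assms(2,3) by auto
  then have "0 < sin (rotation_angle P)"
    by (rule sin_gt_zero)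
  then show ?thesis
    using \<open>0 < rotation_angle P\<close> assms(2)
    by (simp add: rotation_log_def flip: sin_rotation_angle[OF assms(1)])
qed

lemma mexp_rotation_log:
  fixes P :: "real^3^3"
  assumes P: "rotation_matrix P" and t: "-1 < trace P" "trace P < 3"
  shows "mexp (Lambda (rotation_log P)) = P"
proof -
  define \<theta> where "\<theta> = rotation_angle P"
  define \<kappa> where "\<kappa> = \<theta> / (2 * sin \<theta>)"
  define w where "w = rotation_log P"
  note coeffs = Rodrigues_coefficients_arccos[OF t, folded rotation_angle_def \<theta>_def, folded \<kappa>_def]
  have w: "w = \<kappa> *\<^sub>R vee P" "norm w = \<theta>"
    using norm_rotation_log[OF P t] by (simp_all add: w_def rotation_log_def \<kappa>_def \<theta>_def)
  moreover have "0 < \<theta>"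
    using rotation_angle_bounds[OF t] by (simp add: \<theta>_def)
  ultimately have "w \<noteq> 0"
    by auto
  have Lambda_w: "Lambda w $ i $ j = \<kappa> * (P$i$j - P$j$i)" for i j
    by (simp add: w Lambda_scaleR Lambda_vee transpose_def)
  have Lambda_w_sq:
    "(Lambda w ** Lambda w) $ i $ j = \<kappa>\<^sup>2 * (vee P $ i * vee P $ j) - \<theta>\<^sup>2 * mat 1 $ i $ j" for i j
    unfolding Lambda_sq_nth w(2) by (simp add: w(1) power2_eq_square)
  have "mexp (Lambda w) $ i $ j = P $ i $ j" for i j
  proof -
    have "mexp (Lambda w) $ i $ j
        = mat 1 $ i $ j + sin \<theta> / \<theta> * (\<kappa> * (P$i$j - P$j$i))
          + (1 - cos \<theta>) / \<theta>\<^sup>2 * (\<kappa>\<^sup>2 * (vee P $ i * vee P $ j) - \<theta>\<^sup>2 * mat 1 $ i $ j)"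
      by (simp add: Rodrigues_formula[OF \<open>w \<noteq> 0\<close>] w(2) Lambda_w Lambda_w_sq)
    also have "\<dots> = P $ i $ j"
      using rotation_matrix_symmetric_part[OF P, of i j, symmetric] coeffs by algebra
    finally show ?thesis .
  qed
  then show ?thesis
    by (simp add: vec_eq_iff w_def)
qed

lemma rotation_matrix_eq_mexp_Lambda:
  fixes P :: "real^3^3"
  assumes "rotation_matrix P" "-1 < trace P"
  obtains w where "norm w < pi" "mexp (Lambda w) = P"
proof (cases "trace P = 3")
  case True
  then show ?thesis
    using that[of 0] rotation_matrix_trace_eq_3[OF assms(1)] by (simp add: Lambda_0 mexp_0)
next
  case False
  then have "trace P < 3"
    using trace_rotation_matrix_le[OF assms(1)] by simp
  then show ?thesis
    using that[of "rotation_log P"] assms rotation_angle_bounds norm_rotation_log mexp_rotation_log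
    by simp
qed

lemma Rj_in_SO3: "Rj j \<in> SO3"
  by (simp add: Rj_def diag3_def SO3_def vec_eq_iff forall_3 matrix_matrix_mult_def sum_3
      transpose_def mat_def det_3)

lemma Rj_mult_Rj: "Rj j ** Rj j = mat 1"
  by (simp add: Rj_def diag3_def vec_eq_iff forall_3 matrix_matrix_mult_def sum_3 mat_def)

lemma ex_Rj_trace_gt:
  fixes Q :: "real^3^3"
  shows "\<exists>j \<in> {0, 1, 2, 3}. -1 < trace (Rj j ** Q)"
  (* the four traces sum to zero *)
  by (simp add: Rj_def diag3_def trace_3 matrix_matrix_mult_def sum_3) linarith

lemma Uj_subset_SO3: "Uj j \<subseteq> SO3"
  unfolding Uj_def using Rj_in_SO3 mexp_Lambda_in_SO3 SO3_mult by blast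

lemma SO3_subset_Union_Uj: "SO3 \<subseteq> Uj 0 \<union> Uj 1 \<union> Uj 2 \<union> Uj 3"
proof
  fix Q assume "Q \<in> SO3"
  obtain j where j: "j \<in> {0, 1, 2, 3}" and "-1 < trace (Rj j ** Q)"
    using ex_Rj_trace_gt[of Q] by blast
  moreover have "rotation_matrix (Rj j ** Q)"
    using SO3_mult[OF Rj_in_SO3 \<open>Q \<in> SO3\<close>] by (simp add: SO3_iff_rotation_matrix)
  ultimately obtain w where w: "norm w < pi" "mexp (Lambda w) = Rj j ** Q"
    using rotation_matrix_eq_mexp_Lambda by blast
  then have "Rj j ** mexp (Lambda w) = Q"
    by (simp add: matrix_mul_assoc Rj_mult_Rj)
  with w(1) have "Q \<in> Uj j"
    unfolding Uj_def by blast
  with j show "Q \<in> Uj 0 \<union> Uj 1 \<union> Uj 2 \<union> Uj 3"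
    by auto
qed

theorem mainTheorem5:
  shows "Uj 0 \<union> Uj 1 \<union> Uj 2 \<union> Uj 3 = SO3
         \<and> UUj 0 \<union> UUj 1 \<union> UUj 2 \<union> UUj 3 = SE3"
proof -
  have SO3: "Uj 0 \<union> Uj 1 \<union> Uj 2 \<union> Uj 3 = SO3"
    using Uj_subset_SO3 SO3_subset_Union_Uj by blast
  have "UUj 0 \<union> UUj 1 \<union> UUj 2 \<union> UUj 3 = {hom R p | R p. R \<in> Uj 0 \<union> Uj 1 \<union> Uj 2 \<union> Uj 3}"
    unfolding UUj_def by blast
  with SO3 show ?thesis
    unfolding SE3_def by simp
qed

end
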